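(* Let $A>0$ and $\sigma\in\mathbb{R}$, and let $p(x)=\frac12 e^{-|x|}$. Suppose $(\varphi,\eta)\in H^1(\mathbb{R})\times H^1(\mathbb{R})$, not identically zero, with $\varphi(x),\eta(x)\to 0$ as $|x|\to\infty$, is a solitary wave of speed $c\in\mathbb{R}$ of the system $$u_t-u_{txx}-Au_x+3uu_x-\sigma(2u_xu_{xx}+uu_{xxx})+(1+\eta)\eta_x=0,\qquad \eta_t+\big((1+\eta)u\big)_x=0,$$ in the sense that in $\mathcal{D}'(\mathbb{R})$ $$\Big[-c\varphi+\tfrac{\sigma}{2}\varphi^2+p\ast\Big(-A\varphi+\tfrac{3-\sigma}{2}\varphi^2+\tfrac{\sigma}{2}\varphi_x^2+\tfrac12(1+\eta)^2\Big)\Big]_x=0,\qquad \big[-c\eta+(1+\eta)\varphi\big]_x=0.$$ Then $c\neq 0$ and $\varphi(x)\neq c$ for every $x\in\mathbb{R}$.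
   Context: A solitary wave of speed $c$ means a traveling wave $(u,\eta)(t,x)=(\varphi(x-ct),\eta(x-ct))$ solving the system in the weak (distributional) form displayed in the claim, with $(\varphi,\eta)\in H^1\times H^1$ nontrivial and vanishing at infinity. *)

theory Defs
  imports "HOL-Analysis.Analysis"
begin

definition test_function :: "(real \<Rightarrow> real) \<Rightarrow> bool" where
  "test_function \<psi> \<longleftrightarrow>
     (\<forall>k x. ((deriv ^^ k) \<psi>) differentiable (at x)) \<and> bounded {x. \<psi> x \<noteq> 0}"

definition L2 :: "(real \<Rightarrow> real) \<Rightarrow> bool" where
  "L2 f \<longleftrightarrow> f \<in> borel_measurable lborel \<and> integrable lborel (\<lambda>x. (f x)\<^sup>2)"

definition weak_deriv :: "(real \<Rightarrow> real) \<Rightarrow> (real \<Rightarrow> real) \<Rightarrow> bool" where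
  "weak_deriv f g \<longleftrightarrow>
     (\<forall>\<psi>. test_function \<psi> \<longrightarrow>
        (LINT x|lborel. f x * deriv \<psi> x) = - (LINT x|lborel. g x * \<psi> x))"

definition H1_with :: "(real \<Rightarrow> real) \<Rightarrow> (real \<Rightarrow> real) \<Rightarrow> bool" where
  "H1_with f f' \<longleftrightarrow> L2 f \<and> L2 f' \<and> weak_deriv f f'"

definition H1 :: "(real \<Rightarrow> real) \<Rightarrow> bool" where
  "H1 f \<longleftrightarrow> (\<exists>f'. H1_with f f')"

definition dist_deriv_zero :: "(real \<Rightarrow> real) \<Rightarrow> bool" where
  "dist_deriv_zero F \<longleftrightarrow> (\<forall>\<psi>. test_function \<psi> \<longrightarrow> (LINT x|lborel. F x * deriv \<psi> x) = 0)"

definition pker :: "real \<Rightarrow> real" where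
  "pker x = exp (- \<bar>x\<bar>) / 2"

definition pconv :: "(real \<Rightarrow> real) \<Rightarrow> real \<Rightarrow> real" where
  "pconv g x = (LINT y|lborel. pker (x - y) * g y)"

end

theory Submission
  imports Defs "HOL-Computational_Algebra.Polynomial" "HOL-Probability.Distributions"
begin

text \<open>
  The second equation says that \<open>-c\<eta> + (1 + \<eta>)\<phi>\<close> has vanishing distributional derivative;
  being continuous and decaying it vanishes identically. Hence \<open>\<phi>(x) = c\<close> forces \<open>c = 0\<close>,
  and it remains to rule out \<open>c = 0\<close>, i.e. \<open>(1 + \<eta>)\<phi> = 0\<close>.
  Near any point where \<open>\<phi>\<close> vanishes on a neighbourhood, the first equation says that
  \<open>p * g\<close> is locally constant; since \<open>p\<close> is the Green's function of \<open>1 - \<partial>\<^sup>2\<close>, testing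
  with \<open>\<psi> - \<psi>''\<close> shows that \<open>g = (1 + \<eta>)\<^sup>2/2\<close> takes one and the same value at all such points.
  At every other point \<open>\<eta> = -1\<close> by continuity. So the continuous function \<open>(1 + \<eta>)\<^sup>2\<close> takes
  at most two values, hence is constant, equal to \<open>1\<close> by decay. Then \<open>\<phi> = 0\<close>, and
  \<open>\<eta> \<in> {0, -2}\<close> is continuous and decaying, so \<open>\<eta> = 0\<close>: the wave would be trivial.
\<close>

definition smooth :: "(real \<Rightarrow> real) \<Rightarrow> bool" where
  "smooth f \<longleftrightarrow> (\<forall>k x. (deriv ^^ k) f differentiable (at x))"

definition smooth_upto :: "nat \<Rightarrow> (real \<Rightarrow> real) \<Rightarrow> bool" where
  "smooth_upto n f \<longleftrightarrow> (\<forall>k\<le>n. \<forall>x. (deriv ^^ k) f differentiable (at x))"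

lemma smooth_iff_smooth_upto: "smooth f \<longleftrightarrow> (\<forall>n. smooth_upto n f)"
  by (auto simp: smooth_def smooth_upto_def)

lemma smooth_upto_0: "smooth_upto 0 f \<longleftrightarrow> (\<forall>x. f differentiable (at x))"
  by (simp add: smooth_upto_def)

lemma smooth_upto_Suc:
  "smooth_upto (Suc n) f \<longleftrightarrow> (\<forall>x. f differentiable (at x)) \<and> smooth_upto n (deriv f)"
proof -
  have "(\<forall>k\<le>Suc n. P k) \<longleftrightarrow> P 0 \<and> (\<forall>k\<le>n. P (Suc k))" for P
    by (metis Suc_le_mono le0 not0_implies_Suc)
  then show ?thesis
    unfolding smooth_upto_def by (simp add: funpow_Suc_right del: funpow.simps)
qed

lemma smooth_upto_differentiable: "smooth_upto n f \<Longrightarrow> f differentiable (at x)"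
  by (cases n) (simp_all add: smooth_upto_0 smooth_upto_Suc)

lemma smooth_upto_SucD: "smooth_upto (Suc n) f \<Longrightarrow> smooth_upto n f"
  by (simp add: smooth_upto_def)

lemma deriv_add_differentiable:
  fixes f g :: "real \<Rightarrow> real"
  assumes "\<And>x. f differentiable (at x)" "\<And>x. g differentiable (at x)"
  shows "deriv (\<lambda>x. f x + g x) = (\<lambda>x. deriv f x + deriv g x)"
proof -
  have "(f has_real_derivative deriv f x) (at x)" "(g has_real_derivative deriv g x) (at x)" for x
    using assms DERIV_deriv_iff_real_differentiable by blast+
  then show ?thesis by (auto simp: fun_eq_iff intro!: DERIV_imp_deriv derivative_eq_intros)
qed

lemma deriv_mult_differentiable:
  fixes f g :: "real \<Rightarrow> real"
  assumes "\<And>x. f differentiable (at x)" "\<And>x. g differentiable (at x)"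
  shows "deriv (\<lambda>x. f x * g x) = (\<lambda>x. deriv f x * g x + f x * deriv g x)"
proof -
  have "(f has_real_derivative deriv f x) (at x)" "(g has_real_derivative deriv g x) (at x)" for x
    using assms DERIV_deriv_iff_real_differentiable by blast+
  then show ?thesis by (auto simp: fun_eq_iff intro!: DERIV_imp_deriv derivative_eq_intros)
qed

lemma smooth_upto_const: "smooth_upto n (\<lambda>x. c)"
proof (induction n arbitrary: c)
  case (Suc n)
  have "deriv (\<lambda>x. c) = (\<lambda>x. 0)" by (simp add: fun_eq_iff)
  then show ?case using Suc by (simp add: smooth_upto_Suc)
qed (simp add: smooth_upto_0)

lemma smooth_upto_add:
  "smooth_upto n f \<Longrightarrow> smooth_upto n g \<Longrightarrow> smooth_upto n (\<lambda>x. f x + g x)"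
proof (induction n arbitrary: f g)
  case (Suc n)
  then show ?case
    by (simp add: smooth_upto_Suc deriv_add_differentiable)
qed (simp add: smooth_upto_0)

lemma smooth_upto_mult:
  "smooth_upto n f \<Longrightarrow> smooth_upto n g \<Longrightarrow> smooth_upto n (\<lambda>x. f x * g x)"
proof (induction n arbitrary: f g)
  case (Suc n)
  then have "smooth_upto n (\<lambda>x. deriv f x * g x)" "smooth_upto n (\<lambda>x. f x * deriv g x)"
    by (simp_all add: smooth_upto_Suc smooth_upto_SucD)
  with Suc.prems show ?case
    by (simp add: smooth_upto_Suc deriv_mult_differentiable smooth_upto_add)
qed (simp add: smooth_upto_0)

lemma DERIV_compose_affine:
  "(f has_real_derivative D) (at (a * x + b)) \<Longrightarrow>
     ((\<lambda>x. f (a * x + b)) has_real_derivative a * D) (at x)"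
proof -
  have "((\<lambda>x. a * x + b) has_real_derivative a) (at x)"
    by (auto intro!: derivative_eq_intros)
  from DERIV_chain2[OF _ this] show "(f has_real_derivative D) (at (a * x + b)) \<Longrightarrow> ?thesis"
    by (simp add: mult.commute)
qed

lemma smooth_upto_compose_affine:
  "smooth_upto n f \<Longrightarrow> smooth_upto n (\<lambda>x. f (a * x + b))"
proof (induction n arbitrary: f)
  case (0 f)
  then show ?case
    using DERIV_compose_affine smooth_upto_differentiable DERIV_deriv_iff_real_differentiable
    unfolding smooth_upto_0 real_differentiable_def by metis
next
  case (Suc n f)
  have D: "((\<lambda>x. f (a * x + b)) has_real_derivative a * deriv f (a * x + b)) (at x)" for x
    using Suc.prems smooth_upto_differentiable DERIV_deriv_iff_real_differentiable
    by (blast intro: DERIV_compose_affine)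
  then have "deriv (\<lambda>x. f (a * x + b)) = (\<lambda>x. a * deriv f (a * x + b))"
    by (simp add: fun_eq_iff DERIV_imp_deriv)
  moreover have "smooth_upto n (\<lambda>x. a * deriv f (a * x + b))"
    using Suc by (simp add: smooth_upto_Suc smooth_upto_mult smooth_upto_const)
  ultimately show ?case
    using D by (auto simp: smooth_upto_Suc real_differentiable_def)
qed

lemma smooth_iff_deriv: "smooth f \<longleftrightarrow> (\<forall>x. f differentiable (at x)) \<and> smooth (deriv f)"
  unfolding smooth_iff_smooth_upto
  by (metis smooth_upto_Suc smooth_upto_SucD)

lemma smooth_derivative_sequence:
  assumes "\<And>k x. (F k has_real_derivative F (Suc k) x) (at x)"
  shows "smooth (F k)"
proof -
  have "deriv (F k) = F (Suc k)" for k
    using assms by (simp add: fun_eq_iff DERIV_imp_deriv)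
  moreover have "\<And>k x. F k differentiable (at x)"
    using assms real_differentiable_def by blast
  ultimately have "smooth_upto n (F k)" for n
    by (induction n arbitrary: k) (simp_all add: smooth_upto_0 smooth_upto_Suc)
  then show ?thesis by (simp add: smooth_iff_smooth_upto)
qed

lemma smooth_const: "smooth (\<lambda>x. c)"
  by (simp add: smooth_iff_smooth_upto smooth_upto_const)

lemma smooth_add: "smooth f \<Longrightarrow> smooth g \<Longrightarrow> smooth (\<lambda>x. f x + g x)"
  by (simp add: smooth_iff_smooth_upto smooth_upto_add)

lemma smooth_mult: "smooth f \<Longrightarrow> smooth g \<Longrightarrow> smooth (\<lambda>x. f x * g x)"
  by (simp add: smooth_iff_smooth_upto smooth_upto_mult)

lemma smooth_cmult: "smooth f \<Longrightarrow> smooth (\<lambda>x. c * f x)"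
  by (rule smooth_mult[OF smooth_const])

lemma smooth_diff: "smooth f \<Longrightarrow> smooth g \<Longrightarrow> smooth (\<lambda>x. f x - g x)"
  using smooth_add[of f "\<lambda>x. (-1) * g x"] smooth_cmult[of g "-1"] by simp

lemma smooth_divide_const: "smooth f \<Longrightarrow> smooth (\<lambda>x. f x / c)"
  using smooth_cmult[of f "1/c"] by simp

lemma smooth_compose_affine: "smooth f \<Longrightarrow> smooth (\<lambda>x. f (a * x + b))"
  by (simp add: smooth_iff_smooth_upto smooth_upto_compose_affine)

lemma smooth_rescale: "smooth f \<Longrightarrow> smooth (\<lambda>x. f ((x - a) / e))"
  using smooth_compose_affine[of f "1/e" "-a/e"] by (simp add: diff_divide_distrib)

lemma smooth_deriv: "smooth f \<Longrightarrow> smooth (deriv f)"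
  using smooth_iff_deriv by blast

lemma smooth_has_derivative: "smooth f \<Longrightarrow> (f has_real_derivative deriv f x) (at x)"
  using smooth_iff_deriv DERIV_deriv_iff_real_differentiable by blast

lemma smooth_continuous: "smooth f \<Longrightarrow> continuous_on UNIV f"
  by (meson DERIV_isCont continuous_at_imp_continuous_on smooth_has_derivative)

lemma test_function_iff: "test_function \<psi> \<longleftrightarrow> smooth \<psi> \<and> bounded {x. \<psi> x \<noteq> 0}"
  by (simp add: test_function_def smooth_def)

section \<open>A smooth cutoff, a mollifier and a smooth step\<close>

lemma poly_times_exp_minus_tendsto_0: "((\<lambda>s::real. poly p s * exp (- s)) \<longlongrightarrow> 0) at_top"
proof -
  have "((\<lambda>s::real. \<Sum>i\<le>degree p. coeff p i * (s ^ i / exp s)) \<longlongrightarrow> 0) at_top"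
    by (intro tendsto_null_sum tendsto_mult_right_zero tendsto_power_div_exp_0)
  moreover have "poly p s * exp (- s) = (\<Sum>i\<le>degree p. coeff p i * (s ^ i / exp s))" for s
    by (simp add: poly_altdef exp_minus divide_inverse sum_distrib_right mult.assoc)
  ultimately show ?thesis by simp
qed

lemma poly_inverse_times_exp_tendsto_0:
  "((\<lambda>t::real. poly p (1 / t) * exp (- (1 / t))) \<longlongrightarrow> 0) (at_right 0)"
  using filterlim_compose[OF poly_times_exp_minus_tendsto_0 filterlim_inverse_at_top_right]
  by (simp add: o_def inverse_eq_divide)

lemma DERIV_poly_inverse_times_exp:
  assumes "t > 0"
  shows "((\<lambda>t. poly p (1 / t) * exp (- (1 / t))) has_real_derivative
           poly ([:0, 0, 1:] * (p - pderiv p)) (1 / t) * exp (- (1 / t))) (at t)"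
proof -
  have inv: "((\<lambda>t. 1 / t) has_real_derivative - (1 / t^2)) (at t)"
    using assms by (auto intro!: derivative_eq_intros simp: power2_eq_square field_simps)
  have "((\<lambda>t. poly p (1 / t) * exp (- (1 / t))) has_real_derivative
     poly (pderiv p) (1 / t) * (- (1 / t^2)) * exp (- (1 / t)) + (exp (- (1 / t)) * (1 / t^2)) * poly p (1 / t)) (at t)"
    using DERIV_chain2[OF poly_DERIV inv] DERIV_chain2[OF DERIV_exp DERIV_minus[OF inv]]
    by (intro DERIV_mult) simp_all
  then show ?thesis
    by (simp add: algebra_simps power2_eq_square)
qed

definition exp_cutoff :: "real \<Rightarrow> real" where
  "exp_cutoff t = (if t > 0 then exp (- (1 / t)) else 0)"

fun exp_cutoff_poly :: "nat \<Rightarrow> real poly" where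
  "exp_cutoff_poly 0 = 1"
| "exp_cutoff_poly (Suc k) = [:0, 0, 1:] * (exp_cutoff_poly k - pderiv (exp_cutoff_poly k))"

definition exp_cutoff_deriv :: "nat \<Rightarrow> real \<Rightarrow> real" where
  "exp_cutoff_deriv k t = (if t > 0 then poly (exp_cutoff_poly k) (1 / t) * exp (- (1 / t)) else 0)"

lemma DERIV_exp_cutoff_deriv:
  "(exp_cutoff_deriv k has_real_derivative exp_cutoff_deriv (Suc k) t) (at t)"
proof (cases t "0 :: real" rule: linorder_cases)
  case less
  show ?thesis
    by (rule has_field_derivative_transform_within_open[where S="{..<0}" and f="\<lambda>_. 0"])
       (use less in \<open>auto simp: exp_cutoff_deriv_def\<close>)
next
  case greater
  show ?thesis
    by (rule has_field_derivative_transform_within_open[where S="{0<..}"])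
       (use greater DERIV_poly_inverse_times_exp[OF greater, of "exp_cutoff_poly k"]
         in \<open>auto simp: exp_cutoff_deriv_def\<close>)
next
  case equal
  have "((\<lambda>y. (exp_cutoff_deriv k y - exp_cutoff_deriv k 0) / (y - 0)) \<longlongrightarrow> 0) (at 0)"
  proof (rule filterlim_split_at)
    show "((\<lambda>y. (exp_cutoff_deriv k y - exp_cutoff_deriv k 0) / (y - 0)) \<longlongrightarrow> 0) (at_left 0)"
      by (rule tendsto_eventually)
         (auto simp: exp_cutoff_deriv_def eventually_at_left_field intro: exI[of _ "-1"])
    show "((\<lambda>y. (exp_cutoff_deriv k y - exp_cutoff_deriv k 0) / (y - 0)) \<longlongrightarrow> 0) (at_right 0)"
      using poly_inverse_times_exp_tendsto_0[of "pCons 0 (exp_cutoff_poly k)"]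
      by (rule tendsto_cong[THEN iffD1, rotated])
         (auto simp: exp_cutoff_deriv_def eventually_at_right_field intro!: exI[of _ 1])
  qed
  then show ?thesis
    using equal by (simp add: has_field_derivative_iff exp_cutoff_deriv_def)
qed

lemma smooth_exp_cutoff: "smooth exp_cutoff"
proof -
  have "exp_cutoff = exp_cutoff_deriv 0"
    by (auto simp: exp_cutoff_deriv_def exp_cutoff_def fun_eq_iff)
  then show ?thesis
    using smooth_derivative_sequence[of exp_cutoff_deriv 0, OF DERIV_exp_cutoff_deriv] by simp
qed

lemma deriv_iter_vanishing_on_open:
  fixes f :: "real \<Rightarrow> real"
  assumes "open S" "\<And>x. x \<in> S \<Longrightarrow> f x = 0" "x \<in> S"
  shows "(deriv ^^ k) f x = 0"
  using assms(3)
proof (induction k arbitrary: x)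
  case (Suc k)
  have "((deriv ^^ k) f has_real_derivative 0) (at x)"
    by (rule has_field_derivative_transform_within_open[where S=S and f="\<lambda>_. 0"])
       (use Suc assms(1) in auto)
  then show ?case by (simp add: DERIV_imp_deriv)
qed (simp add: assms(2))

lemma
  fixes f :: "real \<Rightarrow> real"
  assumes "continuous_on UNIV f" "\<And>x. x \<notin> {a..b} \<Longrightarrow> f x = 0"
  shows integrable_continuous_vanishing_outside: "integrable lborel f"
    and integral_continuous_vanishing_outside: "(LINT x|lborel. f x) = integral {a..b} f"
proof -
  have e: "f = (\<lambda>x. f x * indicator {a..b} x)"
    using assms(2) by (auto simp: fun_eq_iff indicator_def)
  show i: "integrable lborel f"
    by (subst e, rule borel_integrable_atLeastAtMost)
       (use assms(1) in \<open>auto simp: continuous_on_eq_continuous_at\<close>)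
  have "(f has_integral (LINT x|lborel. f x)) UNIV"
    by (rule has_integral_integral_real[OF i])
  moreover have "(\<lambda>x. if x \<in> {a..b} then f x else 0) = f"
    using assms(2) by auto
  ultimately have "(f has_integral (LINT x|lborel. f x)) {a..b}"
    using has_integral_restrict_UNIV[of "{a..b}" f] by simp
  then show "(LINT x|lborel. f x) = integral {a..b} f" by (simp add: integral_unique)
qed

definition bump :: "real \<Rightarrow> real" where
  "bump t = exp_cutoff (1 + t) * exp_cutoff (1 - t)"

lemma smooth_bump: "smooth bump"
proof -
  have "bump = (\<lambda>t. exp_cutoff (1 * t + 1) * exp_cutoff ((-1) * t + 1))"
    by (simp add: bump_def fun_eq_iff add.commute)
  then show ?thesis
    using smooth_mult[OF smooth_compose_affine smooth_compose_affine, OF smooth_exp_cutoff smooth_exp_cutoff]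
    by metis
qed

lemma exp_cutoff_nonneg: "exp_cutoff t \<ge> 0"
  by (simp add: exp_cutoff_def)

lemma bump_nonneg: "bump t \<ge> 0"
  by (auto simp: bump_def exp_cutoff_def)

lemma bump_eq_0: "\<bar>t\<bar> \<ge> 1 \<Longrightarrow> bump t = 0"
  by (auto simp: bump_def exp_cutoff_def)

lemma bump_lower_bound: "\<bar>t\<bar> \<le> 1/2 \<Longrightarrow> exp (-2) * exp (-2) \<le> bump t"
proof -
  assume t: "\<bar>t\<bar> \<le> 1/2"
  have "exp (-2) \<le> exp_cutoff s" if "s \<ge> 1/2" for s
  proof -
    have "1 / s \<le> 2" using that by (simp add: field_simps)
    then show ?thesis using that by (auto simp: exp_cutoff_def)
  qed
  then show ?thesis
    unfolding bump_def using t by (intro mult_mono exp_cutoff_nonneg) auto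
qed

lemma bump_integral_pos: "(LINT t|lborel. bump t) > 0"
proof -
  have "exp (-2) * exp (-2) = (LINT t|lborel. exp (-2::real) * exp (-2) * indicator {-1/2..1/2::real} t)"
    by simp
  also have "\<dots> \<le> (LINT t|lborel. bump t)"
    by (intro integral_mono borel_integrable_atLeastAtMost integrable_continuous_vanishing_outside[of _ "-1" 1])
       (auto simp: indicator_def bump_nonneg bump_eq_0 smooth_continuous[OF smooth_bump]
             intro!: bump_lower_bound)
  finally show ?thesis
    by (smt (verit) exp_gt_zero mult_pos_pos)
qed

definition mollifier :: "real \<Rightarrow> real" where
  "mollifier t = bump t / (LINT s|lborel. bump s)"

lemma smooth_mollifier: "smooth mollifier"
  unfolding mollifier_def by (rule smooth_divide_const[OF smooth_bump])

lemma continuous_mollifier: "continuous_on UNIV mollifier"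
  by (rule smooth_continuous[OF smooth_mollifier])

lemma mollifier_nonneg: "mollifier t \<ge> 0"
  using bump_integral_pos bump_nonneg by (simp add: mollifier_def)

lemma mollifier_eq_0: "\<bar>t\<bar> \<ge> 1 \<Longrightarrow> mollifier t = 0"
  by (simp add: mollifier_def bump_eq_0)

lemma integral_mollifier: "(LINT t|lborel. mollifier t) = 1"
  using bump_integral_pos by (simp add: mollifier_def)

definition smooth_step :: "real \<Rightarrow> real" where
  "smooth_step t = integral {-2..t} mollifier"

lemma smooth_step_eq_0: "t \<le> -1 \<Longrightarrow> smooth_step t = 0"
proof -
  assume t: "t \<le> -1"
  have "integral {-2..t} mollifier = integral {-2..t} (\<lambda>_. 0)"
    by (rule integral_cong) (use t in \<open>auto intro: mollifier_eq_0\<close>)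
  then show ?thesis by (simp add: smooth_step_def)
qed

lemma smooth_step_eq_1: "t \<ge> 1 \<Longrightarrow> smooth_step t = 1"
  using integral_continuous_vanishing_outside[of mollifier "-2" t] continuous_mollifier
    integral_mollifier mollifier_eq_0[of x for x]
  by (force simp: smooth_step_def)

lemma DERIV_smooth_step: "(smooth_step has_real_derivative mollifier t) (at t)"
proof (cases "t > -2")
  case True
  have "(smooth_step has_real_derivative mollifier t) (at t within {-2..t+1})"
    unfolding smooth_step_def
    by (rule integral_has_real_derivative)
       (use True in \<open>auto intro: continuous_on_subset[OF continuous_mollifier]\<close>)
  then have "(smooth_step has_real_derivative mollifier t) (at t within {-2<..<t+1})"
    by (rule DERIV_subset) auto
  moreover have "at t within {-2<..<t+1} = at t"
    by (rule at_within_open) (use True in auto)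
  ultimately show ?thesis by simp
next
  case False
  show ?thesis
    by (rule has_field_derivative_transform_within_open[where S="{..<-1}" and f="\<lambda>_. 0"])
       (use False in \<open>auto simp: smooth_step_eq_0 mollifier_eq_0\<close>)
qed

lemma deriv_smooth_step: "deriv smooth_step = mollifier"
  using DERIV_smooth_step by (simp add: fun_eq_iff DERIV_imp_deriv)

lemma smooth_smooth_step: "smooth smooth_step"
  using DERIV_smooth_step smooth_mollifier
  by (auto simp: smooth_iff_deriv[of smooth_step] deriv_smooth_step real_differentiable_def)

lemma smooth_step_mono: "s \<le> t \<Longrightarrow> smooth_step s \<le> smooth_step t"
  using DERIV_smooth_step mollifier_nonneg by (blast intro: DERIV_nonneg_imp_nondecreasing)

lemma smooth_step_bounds: "0 \<le> smooth_step t" "smooth_step t \<le> 1"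
  using smooth_step_mono[of "-1" t] smooth_step_eq_0[of t] smooth_step_eq_0[of "-1"]
    smooth_step_mono[of t 1] smooth_step_eq_1[of t] smooth_step_eq_1[of 1]
  by (cases "t \<le> -1"; cases "t \<ge> 1"; simp)+

section \<open>Test functions and mollification\<close>

lemma test_function_support:
  assumes "test_function \<psi>"
  shows "\<exists>M. \<forall>k x. \<bar>x\<bar> > M \<longrightarrow> (deriv ^^ k) \<psi> x = 0"
proof -
  obtain M where M: "\<And>x. \<psi> x \<noteq> 0 \<Longrightarrow> \<bar>x\<bar> \<le> M"
    using assms unfolding test_function_def bounded_iff by auto
  have "open {x::real. M < \<bar>x\<bar>}"
    by (rule open_Collect_less) (auto intro: continuous_intros)
  then have "(deriv ^^ k) \<psi> x = 0" if "\<bar>x\<bar> > M" for k x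
    by (rule deriv_iter_vanishing_on_open) (use M that in force)+
  then show ?thesis by blast
qed

lemma test_function_deriv: "test_function \<psi> \<Longrightarrow> test_function (deriv \<psi>)"
proof -
  assume \<psi>: "test_function \<psi>"
  then obtain M where "\<forall>k x. \<bar>x\<bar> > M \<longrightarrow> (deriv ^^ k) \<psi> x = 0"
    using test_function_support by blast
  then have "{x. deriv \<psi> x \<noteq> 0} \<subseteq> cball 0 M"
    by (force simp: dist_real_def dest: spec[of _ 1])
  then show ?thesis
    using \<psi> by (auto simp: test_function_iff smooth_deriv intro: bounded_subset)
qed

lemma test_function_diff:
  assumes "test_function \<psi>" "test_function \<theta>"
  shows "test_function (\<lambda>x. \<psi> x - \<theta> x)"
proof -
  have "{x. \<psi> x - \<theta> x \<noteq> 0} \<subseteq> {x. \<psi> x \<noteq> 0} \<union> {x. \<theta> x \<noteq> 0}" by auto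
  then have "bounded {x. \<psi> x - \<theta> x \<noteq> 0}"
    using assms by (metis test_function_iff bounded_Un bounded_subset)
  then show ?thesis
    using assms by (simp add: test_function_iff smooth_diff)
qed

lemma DERIV_rescale:
  fixes f :: "real \<Rightarrow> real"
  assumes "(f has_real_derivative D) (at ((x - a) / e))"
  shows "((\<lambda>x. f ((x - a) / e)) has_real_derivative D / e) (at x)"
  using DERIV_compose_affine[of f D "1 / e" x "- a / e"] assms
  by (simp add: diff_divide_distrib)

definition mollifier_at :: "real \<Rightarrow> real \<Rightarrow> real \<Rightarrow> real" where
  "mollifier_at e a x = mollifier ((x - a) / e) / e"

lemma mollifier_at_nonneg: "e > 0 \<Longrightarrow> mollifier_at e a x \<ge> 0"
  by (simp add: mollifier_at_def mollifier_nonneg)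

lemma mollifier_at_eq_0: "e > 0 \<Longrightarrow> \<bar>x - a\<bar> \<ge> e \<Longrightarrow> mollifier_at e a x = 0"
  by (simp add: mollifier_at_def mollifier_eq_0 abs_divide le_divide_eq)

lemma continuous_mollifier_at: "continuous_on UNIV (mollifier_at e a)"
  unfolding mollifier_at_def[abs_def]
  by (intro smooth_continuous smooth_divide_const smooth_rescale smooth_mollifier)

lemma integrable_mult_mollifier_at:
  assumes "e > 0" "continuous_on UNIV F"
  shows "integrable lborel (\<lambda>x. F x * mollifier_at e a x)"
  by (rule integrable_continuous_vanishing_outside[of _ "a - e" "a + e"])
     (use assms in \<open>auto intro!: continuous_intros continuous_mollifier_at mollifier_at_eq_0\<close>)

lemma integral_mollifier_at: "e > 0 \<Longrightarrow> (LINT x|lborel. mollifier_at e a x) = 1"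
  using lborel_integral_real_affine[of e "mollifier_at e a" a] integral_mollifier
  by (simp add: mollifier_at_def)

lemma tendsto_integral_mult_mollifier_at:
  assumes F: "continuous_on UNIV F"
  shows "((\<lambda>e. LINT x|lborel. F x * mollifier_at e a x) \<longlongrightarrow> F a) (at_right 0)"
proof (rule tendstoI)
  fix d :: real assume d: "d > 0"
  have "isCont F a" using F by (simp add: continuous_on_eq_continuous_at)
  then obtain r where r: "r > 0" "\<And>x. \<bar>x - a\<bar> < r \<Longrightarrow> \<bar>F x - F a\<bar> < d / 2"
    using d unfolding continuous_at_eps_delta dist_real_def by (metis half_gt_zero)
  have "dist (LINT x|lborel. F x * mollifier_at e a x) (F a) < d" if e: "0 < e" "e < r" for e
  proof -
    have ic: "integrable lborel (\<lambda>x. c * mollifier_at e a x)" for c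
      using integrable_mult_mollifier_at[OF e(1) continuous_on_const] .
    have i: "integrable lborel (\<lambda>x. F x * mollifier_at e a x)"
            "integrable lborel (\<lambda>x. F a * mollifier_at e a x)"
      using integrable_mult_mollifier_at[OF e(1) F] ic by blast+
    have im: "integrable lborel (mollifier_at e a)"
      using ic[of 1] by simp
    have "(LINT x|lborel. F x * mollifier_at e a x) - F a
        = (LINT x|lborel. F x * mollifier_at e a x) - (LINT x|lborel. F a * mollifier_at e a x)"
      using integral_mollifier_at[OF e(1), of a] im by simp
    also have "\<dots> = (LINT x|lborel. (F x - F a) * mollifier_at e a x)"
      using Bochner_Integration.integral_diff[OF i(1,2)] by (simp add: left_diff_distrib)
    finally have eq: "(LINT x|lborel. F x * mollifier_at e a x) - F a
        = (LINT x|lborel. (F x - F a) * mollifier_at e a x)" .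
    have "\<bar>LINT x|lborel. (F x - F a) * mollifier_at e a x\<bar> \<le> (LINT x|lborel. d / 2 * mollifier_at e a x)"
    proof (rule integral_abs_bound_integral)
      show "integrable lborel (\<lambda>x. (F x - F a) * mollifier_at e a x)"
        using Bochner_Integration.integrable_diff[OF i(1,2)] by (simp add: left_diff_distrib)
      show "\<bar>(F x - F a) * mollifier_at e a x\<bar> \<le> d / 2 * mollifier_at e a x" for x
      proof (cases "\<bar>x - a\<bar> < e")
        case True
        then have "\<bar>F x - F a\<bar> \<le> d / 2" using r(2)[of x] e by auto
        then show ?thesis
          using mollifier_at_nonneg[OF e(1), of a x] by (simp add: abs_mult mult_right_mono del: times_divide_eq_left)
      qed (use e(1) mollifier_at_eq_0 in auto)
      show "integrable lborel (\<lambda>x. d / 2 * mollifier_at e a x)"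
        by (rule ic)
    qed
    also have "\<dots> = d / 2" using integral_mollifier_at[OF e(1), of a] by simp
    finally show ?thesis using eq d by (simp add: dist_real_def)
  qed
  then show "\<forall>\<^sub>F e in at_right 0. dist (LINT x|lborel. F x * mollifier_at e a x) (F a) < d"
    unfolding eventually_at_right_field using r(1) by blast
qed

text \<open>A smoothed indicator of the interval between \<open>a\<close> and \<open>b\<close>, with transition layers of width \<open>2e\<close>.\<close>

definition step_window :: "real \<Rightarrow> real \<Rightarrow> real \<Rightarrow> real \<Rightarrow> real" where
  "step_window a b e x = smooth_step ((x - a) / e) - smooth_step ((x - b) / e)"

lemma deriv_step_window: "deriv (step_window a b e) = (\<lambda>x. mollifier_at e a x - mollifier_at e b x)"
  unfolding step_window_def[abs_def] mollifier_at_def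
  by (intro ext DERIV_imp_deriv DERIV_diff DERIV_rescale DERIV_smooth_step)

lemma step_window_eq_0:
  assumes "e > 0" "x \<le> min a b - e \<or> x \<ge> max a b + e"
  shows "step_window a b e x = 0"
proof -
  have "(x - a) / e \<le> -1 \<and> (x - b) / e \<le> -1 \<or> (x - a) / e \<ge> 1 \<and> (x - b) / e \<ge> 1"
    using assms by (auto simp: field_simps)
  then show ?thesis by (auto simp: step_window_def smooth_step_eq_0 smooth_step_eq_1)
qed

lemma test_function_step_window: "e > 0 \<Longrightarrow> test_function (step_window a b e)"
proof -
  assume e: "e > 0"
  have "step_window a b e x = 0" if "x \<notin> {min a b - e .. max a b + e}" for x
    using that by (intro step_window_eq_0[OF e]) auto
  then have "{x. step_window a b e x \<noteq> 0} \<subseteq> {min a b - e .. max a b + e}"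
    by blast
  moreover have "smooth (step_window a b e)"
    unfolding step_window_def[abs_def] by (intro smooth_diff smooth_rescale smooth_smooth_step)
  ultimately show ?thesis
    using bounded_subset[OF bounded_closed_interval] by (auto simp: test_function_iff)
qed

lemma eq_if_integral_mult_deriv_step_window_eq_0:
  assumes F: "continuous_on UNIV F"
    and I: "\<forall>\<^sub>F e in at_right 0. (LINT x|lborel. F x * deriv (step_window a b e) x) = 0"
  shows "F a = F b"
proof -
  define J where "J e = (LINT x|lborel. F x * mollifier_at e a x) - (LINT x|lborel. F x * mollifier_at e b x)" for e
  have J: "J e = (LINT x|lborel. F x * deriv (step_window a b e) x)" if "e > 0" for e
  proof -
    have "integrable lborel (\<lambda>x. F x * mollifier_at e c x)" for c
      using that F by (rule integrable_mult_mollifier_at)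
    then show ?thesis
      by (simp add: J_def deriv_step_window right_diff_distrib)
  qed
  have "\<forall>\<^sub>F e in at_right 0. J e = 0"
    using I eventually_at_right_less[of 0] by eventually_elim (simp add: J)
  moreover have "(J \<longlongrightarrow> F a - F b) (at_right 0)"
    unfolding J_def by (intro tendsto_diff tendsto_integral_mult_mollifier_at F)
  ultimately have "F a - F b = 0"
    using tendsto_unique[OF _ _ tendsto_eventually] by (metis trivial_limit_at_right_real)
  then show ?thesis by simp
qed

lemma dist_deriv_zero_imp_constant:
  assumes "continuous_on UNIV F" "dist_deriv_zero F"
  shows "F a = F b"
  using assms test_function_step_window
  by (intro eq_if_integral_mult_deriv_step_window_eq_0)
     (auto simp: dist_deriv_zero_def eventually_at_right_field intro!: exI[of _ 1])

section \<open>Weak derivatives of functions vanishing on an interval\<close>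

lemma L2_integrable_on_interval:
  assumes "L2 g"
  shows "integrable lborel (\<lambda>x. g x * indicator {c..d} x)"
proof -
  have "integrable lborel (\<lambda>x. (g x)\<^sup>2 + indicator {c..d} x)"
    using assms borel_integrable_atLeastAtMost[of c d "\<lambda>_. 1 :: real"]
    by (auto simp: L2_def)
  then show ?thesis
  proof (rule Bochner_Integration.integrable_bound)
    have [measurable]: "g \<in> borel_measurable borel"
      using assms by (simp add: L2_def)
    show "(\<lambda>x. g x * indicator {c..d} x) \<in> borel_measurable lborel"
      by measurable
    have "\<bar>g x\<bar> \<le> (g x)\<^sup>2 + 1" for x
      using sum_squares_ge_zero[of "\<bar>g x\<bar> - 1" 0] by (simp add: power2_eq_square algebra_simps)
    then show "AE x in lborel. norm (g x * indicator {c..d} x) \<le> norm ((g x)\<^sup>2 + indicator {c..d} x)"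
      by (auto simp: indicator_def)
  qed
qed

lemma
  assumes "e > 0" "2 * e \<le> d - c" "x \<le> c \<or> x \<ge> d"
  shows step_window_inset_eq_0: "step_window (c + e) (d - e) e x = 0"
    and deriv_step_window_inset_eq_0: "deriv (step_window (c + e) (d - e) e) x = 0"
  using assms by (auto simp: step_window_eq_0 deriv_step_window mollifier_at_eq_0)

lemma step_window_inset_bound:
  assumes "e > 0" "2 * e \<le> d - c"
  shows "\<bar>step_window (c + e) (d - e) e x\<bar> \<le> indicator {c..d} x"
proof (cases "x \<le> c \<or> x \<ge> d")
  case False
  have "(x - (d - e)) / e \<le> (x - (c + e)) / e"
    using assms by (intro divide_right_mono) auto
  then have "smooth_step ((x - (d - e)) / e) \<le> smooth_step ((x - (c + e)) / e)"
    by (rule smooth_step_mono)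
  moreover have "indicator {c..d} x = (1 :: real)"
    using False by simp
  ultimately show ?thesis
    using smooth_step_bounds[of "(x - (c + e)) / e"] smooth_step_bounds[of "(x - (d - e)) / e"]
    by (simp add: step_window_def)
qed (use assms step_window_inset_eq_0 in auto)

lemma step_window_inset_eq_1:
  assumes "e > 0" "x - c \<ge> 2 * e" "d - x \<ge> 2 * e"
  shows "step_window (c + e) (d - e) e x = 1"
proof -
  have "(x - (c + e)) / e \<ge> 1" "(x - (d - e)) / e \<le> -1"
    using assms by (simp_all add: field_simps)
  then show ?thesis by (simp add: step_window_def smooth_step_eq_0 smooth_step_eq_1)
qed

lemma tendsto_integral_mult_step_window:
  assumes g: "g \<in> borel_measurable lborel" "integrable lborel (\<lambda>x. g x * indicator {c..d} x)"
    and e: "\<And>n. e n > 0" "\<And>n. 2 * e n \<le> d - c" "e \<longlonglongrightarrow> 0"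
  shows "(\<lambda>n. LINT x|lborel. g x * step_window (c + e n) (d - e n) (e n) x)
           \<longlonglongrightarrow> (LINT x|lborel. g x * indicator {c<..<d} x)"
proof (rule integral_dominated_convergence[where w="\<lambda>x. \<bar>g x * indicator {c..d} x\<bar>"])
  show "(\<lambda>x. g x * indicator {c<..<d} x) \<in> borel_measurable lborel"
    using g(1) by measurable
  show "(\<lambda>x. g x * step_window (c + e n) (d - e n) (e n) x) \<in> borel_measurable lborel" for n
  proof (rule borel_measurable_times[OF g(1)])
    have "smooth (step_window (c + e n) (d - e n) (e n))"
      using test_function_step_window[OF e(1)] by (simp add: test_function_iff)
    then show "step_window (c + e n) (d - e n) (e n) \<in> borel_measurable lborel"
      by (simp add: borel_measurable_continuous_onI smooth_continuous)
  qed
  show "integrable lborel (\<lambda>x. \<bar>g x * indicator {c..d} x\<bar>)"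
    using g(2) by (rule integrable_abs)
  show "AE x in lborel. norm (g x * step_window (c + e n) (d - e n) (e n) x) \<le> \<bar>g x * indicator {c..d} x\<bar>" for n
    using step_window_inset_bound[OF e(1,2)]
    by (intro AE_I2) (simp add: abs_mult mult_left_mono)
  show "AE x in lborel. (\<lambda>n. g x * step_window (c + e n) (d - e n) (e n) x) \<longlonglongrightarrow> g x * indicator {c<..<d} x"
  proof (intro AE_I2)
    fix x
    have "\<forall>\<^sub>F n in sequentially. step_window (c + e n) (d - e n) (e n) x = indicator {c<..<d} x"
    proof (cases "x \<le> c \<or> x \<ge> d")
      case True
      then show ?thesis using step_window_inset_eq_0[OF e(1,2)] by auto
    next
      case False
      then have m: "min (x - c) (d - x) > 0" by simp
      have "(\<lambda>n. 2 * e n) \<longlonglongrightarrow> 0"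
        using tendsto_mult_right_zero[OF e(3)] .
      then have "\<forall>\<^sub>F n in sequentially. 2 * e n < min (x - c) (d - x)"
        using m by (rule order_tendstoD)
      then show ?thesis
      proof eventually_elim
        case (elim n)
        then show ?case
          using False step_window_inset_eq_1[OF e(1)[of n], where x=x and c=c and d=d] by simp
      qed
    qed
    then have "\<forall>\<^sub>F n in sequentially.
        g x * step_window (c + e n) (d - e n) (e n) x = g x * indicator {c<..<d} x"
      by eventually_elim simp
    then show "(\<lambda>n. g x * step_window (c + e n) (d - e n) (e n) x) \<longlonglongrightarrow> g x * indicator {c<..<d} x"
      by (rule tendsto_eventually)
  qed
qed

lemma weak_deriv_integral_Ioo_eq_0:
  assumes W: "weak_deriv \<phi> \<phi>'" and L: "L2 \<phi>'"
    and Z: "\<And>x. c < x \<Longrightarrow> x < d \<Longrightarrow> \<phi> x = 0" and cd: "c < d"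
  shows "(LINT x|lborel. \<phi>' x * indicator {c<..<d} x) = 0"
proof -
  define e where "e n = (d - c) / (real n + 2)" for n
  have e: "e n > 0" "2 * e n \<le> d - c" for n
  proof -
    have "(d - c) * 2 \<le> (d - c) * (real n + 2)"
      using cd by (intro mult_left_mono) auto
    then show "e n > 0" "2 * e n \<le> d - c"
      using cd by (simp_all add: e_def field_simps)
  qed
  have "filterlim (\<lambda>n. real n + 2) at_top sequentially"
    using filterlim_tendsto_add_at_top[OF tendsto_const filterlim_real_sequentially, of 2]
    by (simp add: add.commute)
  then have "e \<longlonglongrightarrow> 0"
    unfolding e_def[abs_def]
    by (intro tendsto_divide_0[OF tendsto_const] filterlim_at_top_imp_at_infinity)
  then have "(\<lambda>n. LINT x|lborel. \<phi>' x * step_window (c + e n) (d - e n) (e n) x)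
               \<longlonglongrightarrow> (LINT x|lborel. \<phi>' x * indicator {c<..<d} x)"
    using L e by (intro tendsto_integral_mult_step_window L2_integrable_on_interval) (auto simp: L2_def)
  moreover have "(LINT x|lborel. \<phi>' x * step_window (c + e n) (d - e n) (e n) x) = 0" for n
  proof -
    have "\<phi> x * deriv (step_window (c + e n) (d - e n) (e n)) x = 0" for x
    proof (cases "x \<le> c \<or> x \<ge> d")
      case True
      then show ?thesis using deriv_step_window_inset_eq_0[OF e True] by simp
    qed (use Z in auto)
    then have "(\<lambda>x. \<phi> x * deriv (step_window (c + e n) (d - e n) (e n)) x) = (\<lambda>x. 0)"
      by (rule ext)
    moreover have "(LINT x|lborel. \<phi> x * deriv (step_window (c + e n) (d - e n) (e n)) x)
        = - (LINT x|lborel. \<phi>' x * step_window (c + e n) (d - e n) (e n) x)"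
      using W test_function_step_window[OF e(1)] unfolding weak_deriv_def by blast
    ultimately show ?thesis by simp
  qed
  ultimately have "(\<lambda>n. 0) \<longlonglongrightarrow> (LINT x|lborel. \<phi>' x * indicator {c<..<d} x)"
    by simp
  then show ?thesis
    by (simp add: LIMSEQ_const_iff)
qed

lemma AE_eq_0_if_integral_Ioi_eq_0:
  fixes f :: "real \<Rightarrow> real"
  assumes f: "integrable lborel f" and I: "\<And>t. (LINT x|lborel. f x * indicator {t<..} x) = 0"
  shows "AE x in lborel. f x = 0"
proof -
  define fp where "fp x = max (f x) 0" for x
  define fm where "fm x = max (- f x) 0" for x
  have ifp: "integrable lborel fp" and ifm: "integrable lborel fm"
    unfolding fp_def fm_def using f by auto
  have emeasure_density: "emeasure (density lborel (\<lambda>x. ennreal (h x))) {t<..}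
      = ennreal (LINT x|lborel. h x * indicator {t<..} x)"
    if "integrable lborel h" "\<And>x. h x \<ge> 0" for h :: "real \<Rightarrow> real" and t
  proof -
    have "emeasure (density lborel (\<lambda>x. ennreal (h x))) {t<..} = (\<integral>\<^sup>+ x. ennreal (h x * indicator {t<..} x) \<partial>lborel)"
      using that(1) by (subst emeasure_density) (auto intro!: nn_integral_cong simp: indicator_def)
    also have "\<dots> = ennreal (LINT x|lborel. h x * indicator {t<..} x)"
      using that by (intro nn_integral_eq_integral integrable_real_mult_indicator) (auto simp: indicator_def)
    finally show ?thesis .
  qed
  have "(LINT x|lborel. fp x * indicator {t<..} x) = (LINT x|lborel. fm x * indicator {t<..} x)" for t
  proof -
    have "(\<lambda>x. fp x * indicator {t<..} x - fm x * indicator {t<..} x) = (\<lambda>x. f x * indicator {t<..} x)"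
      by (auto simp: fp_def fm_def fun_eq_iff indicator_def max_def)
    then show ?thesis
      using I[of t] Bochner_Integration.integral_diff[of lborel "\<lambda>x. fp x * indicator {t<..} x" "\<lambda>x. fm x * indicator {t<..} x"]
        ifp ifm by (simp add: integrable_real_mult_indicator)
  qed
  then have "density lborel (\<lambda>x. ennreal (fp x)) = density lborel (\<lambda>x. ennreal (fm x))"
    using emeasure_density[OF ifp] emeasure_density[OF ifm]
    by (intro measure_eqI_lessThan) (auto simp: fp_def fm_def)
  then have "AE x in lborel. ennreal (fp x) = ennreal (fm x)"
    using ifp ifm by (intro sigma_finite_measure.density_unique[OF sigma_finite_lborel]) auto
  then show ?thesis
    by eventually_elim (auto simp: fp_def fm_def max_def split: if_splits)
qed

lemma weak_deriv_AE_eq_0: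
  assumes W: "weak_deriv \<phi> \<phi>'" and L: "L2 \<phi>'"
    and Z: "\<And>x. a < x \<Longrightarrow> x < b \<Longrightarrow> \<phi> x = 0"
  shows "AE x in lborel. a < x \<and> x < b \<longrightarrow> \<phi>' x = 0"
proof (cases "a < b")
  case True
  define f where "f x = \<phi>' x * indicator {a<..<b} x" for x
  have "integrable lborel (\<lambda>x. (\<phi>' x * indicator {a..b} x) * indicator {a<..<b} x)"
    using L2_integrable_on_interval[OF L] by (rule integrable_real_mult_indicator[rotated]) auto
  then have "integrable lborel f"
    by (rule Bochner_Integration.integrable_cong[THEN iffD1, rotated 2])
       (auto simp: f_def indicator_def)
  moreover have "(LINT x|lborel. f x * indicator {t<..} x) = 0" for t
  proof -
    have "f x * indicator {t<..} x = \<phi>' x * indicator {max a t<..<b} x" for x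
      by (auto simp: f_def indicator_def)
    then have "(LINT x|lborel. f x * indicator {t<..} x) = (LINT x|lborel. \<phi>' x * indicator {max a t<..<b} x)"
      by simp
    also have "\<dots> = 0"
    proof (cases "max a t < b")
      case True
      then show ?thesis
        by (rule weak_deriv_integral_Ioo_eq_0[OF W L, rotated]) (use Z in auto)
    next
      case False
      then have "{max a t<..<b} = {}" by auto
      then show ?thesis by simp
    qed
    finally show ?thesis .
  qed
  ultimately have "AE x in lborel. f x = 0"
    by (rule AE_eq_0_if_integral_Ioi_eq_0)
  then show ?thesis
    by eventually_elim (auto simp: f_def)
qed simp

section \<open>The kernel \<open>p\<close> as Green's function of \<open>1 - \<partial>\<^sup>2\<close>\<close>

lemma integral_DERIV_eq:
  assumes "a \<le> b" "\<And>x. (F has_real_derivative f x) (at x)"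
  shows "integral {a..b} f = F b - F a"
proof -
  have "(f has_integral (F b - F a)) {a..b}"
    using assms has_real_derivative_iff_has_vector_derivative has_vector_derivative_at_within
    by (intro fundamental_theorem_of_calculus) blast+
  then show ?thesis by (rule integral_unique)
qed

lemma pker_nonneg: "pker x \<ge> 0"
  by (simp add: pker_def)

lemma pker_le: "pker (x - y) \<le> exp \<bar>x\<bar> * exp (- \<bar>y\<bar>) / 2"
proof -
  have "exp (- \<bar>x - y\<bar>) \<le> exp (\<bar>x\<bar> + - \<bar>y\<bar>)" by simp
  then show ?thesis by (simp only: pker_def exp_add divide_right_mono)
qed

lemma continuous_pker: "continuous_on UNIV (\<lambda>x. pker (x - y))"
  unfolding pker_def by (intro continuous_intros) auto

lemma integral_pker_Green:
  assumes "test_function \<theta>"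
  shows "(LINT x|lborel. pker (x - y) * (\<theta> x - deriv (deriv \<theta>) x)) = \<theta> y"
proof -
  obtain M where M: "\<And>k x. \<bar>x\<bar> > M \<Longrightarrow> (deriv ^^ k) \<theta> x = 0"
    using test_function_support[OF assms] by blast
  define R where "R = max M \<bar>y\<bar> + 1"
  have R: "-R \<le> y" "y \<le> R" "\<theta> R = 0" "deriv \<theta> R = 0" "\<theta> (-R) = 0" "deriv \<theta> (-R) = 0"
    using M[of R 0] M[of R 1] M[of "-R" 0] M[of "-R" 1] by (auto simp: R_def)
  have s: "smooth \<theta>" "smooth (deriv \<theta>)"
    using assms by (auto simp: test_function_iff smooth_deriv)
  note d = smooth_has_derivative[OF s(1)] smooth_has_derivative[OF s(2)]
  define f where "f x = pker (x - y) * (\<theta> x - deriv (deriv \<theta>) x)" for x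
  have cf: "continuous_on UNIV f"
    unfolding f_def[abs_def]
    by (intro continuous_intros continuous_pker smooth_continuous s smooth_deriv)
  have "(LINT x|lborel. f x) = integral {-R..R} f"
    using M[of _ 0] M[of _ 2] by (intro integral_continuous_vanishing_outside cf)
       (auto simp: f_def R_def numeral_2_eq_2)
  also have "\<dots> = integral {-R..y} f + integral {y..R} f"
    using R by (intro Henstock_Kurzweil_Integration.integral_combine[symmetric]
        integrable_continuous_real continuous_on_subset[OF cf]) auto
  also have "integral {-R..y} f = integral {-R..y} (\<lambda>x. exp (x - y) / 2 * (\<theta> x - deriv (deriv \<theta>) x))"
    by (rule integral_cong) (auto simp: f_def pker_def)
  also have "\<dots> = (\<theta> y - deriv \<theta> y) / 2"
    using R d
    by (subst integral_DERIV_eq[where F="\<lambda>x. exp (x - y) / 2 * (\<theta> x - deriv \<theta> x)"])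
       (auto intro!: derivative_eq_intros simp: field_simps)
  also have "integral {y..R} f = integral {y..R} (\<lambda>x. exp (y - x) / 2 * (\<theta> x - deriv (deriv \<theta>) x))"
    by (rule integral_cong) (auto simp: f_def pker_def)
  also have "\<dots> = (\<theta> y + deriv \<theta> y) / 2"
    using R d
    by (subst integral_DERIV_eq[where F="\<lambda>x. - exp (y - x) / 2 * (\<theta> x + deriv \<theta> x)"])
       (auto intro!: derivative_eq_intros simp: field_simps)
  finally show ?thesis
    by (simp add: f_def field_simps)
qed

lemma integrable_exp_minus_abs: "integrable lborel (\<lambda>y::real. exp (- \<bar>y\<bar>))"
proof -
  define f where "f y = exp (- y) * indicator {0..} y" for y :: real
  have "(\<integral>\<^sup>+ y. ennreal (f y) \<partial>lborel) = (\<integral>\<^sup>+ y. ennreal (y ^ 0 * exp (- y)) * indicator {0..} y \<partial>lborel)"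
    by (intro nn_integral_cong) (auto simp: f_def indicator_def)
  also have "\<dots> = 1"
    using nn_intergal_power_times_exp_Ici[of 0] by simp
  moreover have "f \<in> borel_measurable lborel"
    unfolding f_def by measurable
  ultimately have f: "integrable lborel f"
    by (intro integrableI_nonneg) (auto simp: f_def)
  have "integrable lborel (\<lambda>y. f y + f (0 + (-1) * y))"
    using f lborel_integrable_real_affine[OF f, of "-1" 0] by simp
  then show ?thesis
    by (rule Bochner_Integration.integrable_bound) (auto simp: f_def indicator_def intro!: AE_I2)
qed

lemma L2_integrable_mult_exp:
  assumes "L2 f"
  shows "integrable lborel (\<lambda>y. f y * exp (- \<bar>y\<bar>))"
proof -
  have "integrable lborel (\<lambda>y. (f y)\<^sup>2 + exp (- \<bar>y\<bar>))"
    using assms integrable_exp_minus_abs by (auto simp: L2_def)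
  then show ?thesis
  proof (rule Bochner_Integration.integrable_bound)
    have [measurable]: "f \<in> borel_measurable borel"
      using assms by (simp add: L2_def)
    show "(\<lambda>y. f y * exp (- \<bar>y\<bar>)) \<in> borel_measurable lborel"
      by measurable
    have "\<bar>f y\<bar> * exp (- \<bar>y\<bar>) \<le> (f y)\<^sup>2 + exp (- \<bar>y\<bar>)" for y
    proof (cases "\<bar>f y\<bar> \<le> 1")
      case True
      then have "\<bar>f y\<bar> * exp (- \<bar>y\<bar>) \<le> exp (- \<bar>y\<bar>)"
        using mult_right_mono[OF True, of "exp (- \<bar>y\<bar>)"] by simp
      then show ?thesis
        using zero_le_power2[of "f y"] by linarith
    next
      case False
      have "exp (- \<bar>y\<bar>) \<le> 1" by simp
      then have "exp (- \<bar>y\<bar>) \<le> \<bar>f y\<bar>"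
        using False by linarith
      then have "\<bar>f y\<bar> * exp (- \<bar>y\<bar>) \<le> \<bar>f y\<bar> * \<bar>f y\<bar>"
        by (intro mult_left_mono) auto
      then show ?thesis
        using exp_gt_zero[of "- \<bar>y\<bar>"] unfolding power2_eq_square by linarith
    qed
    then show "AE y in lborel. norm (f y * exp (- \<bar>y\<bar>)) \<le> norm ((f y)\<^sup>2 + exp (- \<bar>y\<bar>))"
      by (intro AE_I2) (simp add: abs_mult)
  qed
qed

lemma L2_integrable_square_mult_exp:
  assumes "L2 f"
  shows "integrable lborel (\<lambda>y. (f y)\<^sup>2 * exp (- \<bar>y\<bar>))"
proof -
  have [measurable]: "f \<in> borel_measurable borel"
    using assms by (simp add: L2_def)
  have "integrable lborel (\<lambda>y. (f y)\<^sup>2)"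
    using assms by (simp add: L2_def)
  then show ?thesis
  proof (rule Bochner_Integration.integrable_bound)
    show "(\<lambda>y. (f y)\<^sup>2 * exp (- \<bar>y\<bar>)) \<in> borel_measurable lborel"
      by measurable
    show "AE y in lborel. norm ((f y)\<^sup>2 * exp (- \<bar>y\<bar>)) \<le> norm ((f y)\<^sup>2)"
      by (intro AE_I2) (simp add: mult_left_le)
  qed
qed

lemma integrable_lborel_pair_product:
  fixes u v :: "real \<Rightarrow> real"
  assumes u: "integrable lborel u" and v: "integrable lborel v"
  shows "integrable (lborel \<Otimes>\<^sub>M lborel) (\<lambda>p. u (fst p) * v (snd p))"
proof (rule lborel_pair.Fubini_integrable)
  show "(\<lambda>p. u (fst p) * v (snd p)) \<in> borel_measurable (lborel \<Otimes>\<^sub>M lborel)"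
    using borel_measurable_integrable[OF u] borel_measurable_integrable[OF v] by measurable
  show "integrable lborel (\<lambda>x. LINT y|lborel. norm (u (fst (x, y)) * v (snd (x, y))))"
    using u by (simp add: abs_mult integrable_abs)
  show "AE x in lborel. integrable lborel (\<lambda>y. u (fst (x, y)) * v (snd (x, y)))"
    using v by simp
qed

lemma integrable_pker_product:
  fixes g h :: "real \<Rightarrow> real"
  assumes g: "g \<in> borel_measurable lborel" "integrable lborel (\<lambda>y. g y * exp (- \<bar>y\<bar>))"
    and h: "h \<in> borel_measurable lborel" "\<And>x. \<bar>h x\<bar> \<le> B * indicator {-M..M} x"
  shows "integrable (lborel \<Otimes>\<^sub>M lborel) (\<lambda>p. h (fst p) * (pker (fst p - snd p) * g (snd p)))"
proof -
  have "integrable (lborel \<Otimes>\<^sub>M lborel) (\<lambda>p. B * exp M / 2 * indicator {-M..M} (fst p) * \<bar>g (snd p) * exp (- \<bar>snd p\<bar>)\<bar>)"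
  proof (rule integrable_lborel_pair_product)
    show "integrable lborel (\<lambda>x. B * exp M / 2 * indicator {-M..M} x)"
      by (rule borel_integrable_atLeastAtMost) auto
  qed (use g(2) in auto)
  then show ?thesis
  proof (rule Bochner_Integration.integrable_bound)
    have [measurable]: "h \<in> borel_measurable borel" "g \<in> borel_measurable borel"
      using g(1) h(1) by simp_all
    have [measurable]: "pker \<in> borel_measurable borel"
      unfolding pker_def[abs_def] by (intro borel_measurable_continuous_onI continuous_intros) auto
    show "(\<lambda>p. h (fst p) * (pker (fst p - snd p) * g (snd p))) \<in> borel_measurable (lborel \<Otimes>\<^sub>M lborel)"
      by measurable
    show "AE p in lborel \<Otimes>\<^sub>M lborel. norm (h (fst p) * (pker (fst p - snd p) * g (snd p)))
        \<le> norm (B * exp M / 2 * indicator {-M..M} (fst p) * \<bar>g (snd p) * exp (- \<bar>snd p\<bar>)\<bar>)"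
    proof (intro AE_I2)
      fix p :: "real \<times> real"
      obtain x y where p: "p = (x, y)" by (cases p)
      show "norm (h (fst p) * (pker (fst p - snd p) * g (snd p)))
          \<le> norm (B * exp M / 2 * indicator {-M..M} (fst p) * \<bar>g (snd p) * exp (- \<bar>snd p\<bar>)\<bar>)"
      proof (cases "x \<in> {-M..M}")
        case True
        have hx: "\<bar>h x\<bar> \<le> B" using h(2)[of x] True by simp
        have "exp \<bar>x\<bar> * exp (- \<bar>y\<bar>) / 2 \<le> exp M * exp (- \<bar>y\<bar>) / 2"
          using True by (intro divide_right_mono mult_right_mono) auto
        then have "pker (x - y) \<le> exp M * exp (- \<bar>y\<bar>) / 2"
          using pker_le[of x y] by linarith
        then have "\<bar>h x\<bar> * (pker (x - y) * \<bar>g y\<bar>) \<le> B * (exp M * exp (- \<bar>y\<bar>) / 2 * \<bar>g y\<bar>)"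
          using hx by (intro mult_mono mult_right_mono) (auto simp: pker_nonneg)
        then show ?thesis
          using True hx by (simp add: p abs_mult pker_nonneg mult_ac)
      next
        case False
        then show ?thesis using h(2)[of x] by (simp add: p)
      qed
    qed
  qed
qed

lemma integral_pconv_mult_Green:
  fixes g \<theta> :: "real \<Rightarrow> real"
  assumes g: "g \<in> borel_measurable lborel" "integrable lborel (\<lambda>y. g y * exp (- \<bar>y\<bar>))"
    and \<theta>: "test_function \<theta>"
  shows "(LINT x|lborel. pconv g x * (\<theta> x - deriv (deriv \<theta>) x)) = (LINT y|lborel. g y * \<theta> y)"
proof -
  define h where "h x = \<theta> x - deriv (deriv \<theta>) x" for x
  obtain M where M: "\<And>k x. \<bar>x\<bar> > M \<Longrightarrow> (deriv ^^ k) \<theta> x = 0"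
    using test_function_support[OF \<theta>] by blast
  have ch: "continuous_on UNIV h"
    using \<theta> unfolding h_def[abs_def] test_function_iff
    by (intro continuous_intros smooth_continuous smooth_deriv) auto
  obtain B where B: "\<forall>x\<in>{-M..M}. \<bar>h x\<bar> \<le> B"
    using compact_imp_bounded[OF compact_continuous_image[OF continuous_on_subset[OF ch], of "{-M..M}"]]
    by (auto simp: bounded_iff)
  have "\<bar>h x\<bar> \<le> B * indicator {-M..M} x" for x
  proof (cases "x \<in> {-M..M}")
    case False
    then have "M < \<bar>x\<bar>" by auto
    then show ?thesis
      using M[of x 0] M[of x 2] False by (simp add: h_def numeral_2_eq_2)
  qed (use B in simp)
  moreover have "h \<in> borel_measurable lborel"
    using ch by (simp add: borel_measurable_continuous_onI)
  ultimately have F: "integrable (lborel \<Otimes>\<^sub>M lborel) (\<lambda>p. h (fst p) * (pker (fst p - snd p) * g (snd p)))"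
    by (intro integrable_pker_product g)
  have "(LINT x|lborel. pconv g x * h x) = (LINT x|lborel. LINT y|lborel. h x * (pker (x - y) * g y))"
    by (simp add: pconv_def mult.commute)
  also have "\<dots> = (LINT y|lborel. LINT x|lborel. h x * (pker (x - y) * g y))"
    using lborel_pair.Fubini_integral[of "\<lambda>x y. h x * (pker (x - y) * g y)"] F
    by (simp add: case_prod_unfold)
  also have "\<dots> = (LINT y|lborel. g y * \<theta> y)"
    using integral_pker_Green[OF \<theta>] by (simp add: h_def mult_ac)
  finally show ?thesis by (simp add: h_def)
qed

lemma integral_mult_deriv_eq_0_if_dist_deriv_zero_pconv:
  fixes G g w :: "real \<Rightarrow> real"
  assumes D: "dist_deriv_zero (\<lambda>x. G x + pconv g x)"
    and g: "g \<in> borel_measurable lborel" "integrable lborel (\<lambda>y. g y * exp (- \<bar>y\<bar>))"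
    and w: "test_function w"
    and G: "\<And>x. deriv w x \<noteq> 0 \<or> deriv (deriv (deriv w)) x \<noteq> 0 \<Longrightarrow> G x = 0"
  shows "(LINT y|lborel. g y * deriv w y) = 0"
proof -
  define \<theta> where "\<theta> = deriv w"
  \<comment> \<open>Testing with \<open>\<psi>\<close> turns the pairing of \<open>(p * g)'\<close> into that of \<open>g\<close> with \<open>\<theta>\<close>.\<close>
  define \<psi> where "\<psi> x = w x - deriv \<theta> x" for x
  have \<theta>: "test_function \<theta>" "test_function (deriv \<theta>)"
    unfolding \<theta>_def using test_function_deriv[OF w] by (simp_all add: test_function_deriv)
  have \<psi>: "test_function \<psi>"
    unfolding \<psi>_def using w \<theta>(2) by (rule test_function_diff)
  have "smooth w" "smooth (deriv \<theta>)"
    using w \<theta>(2) by (simp_all add: test_function_iff)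
  then have "(\<psi> has_real_derivative \<theta> x - deriv (deriv \<theta>) x) (at x)" for x
    unfolding \<psi>_def[abs_def] \<theta>_def by (intro DERIV_diff smooth_has_derivative)
  then have d\<psi>: "deriv \<psi> = (\<lambda>x. \<theta> x - deriv (deriv \<theta>) x)"
    by (intro ext DERIV_imp_deriv)
  have pointwise: "(G x + pconv g x) * deriv \<psi> x = pconv g x * (\<theta> x - deriv (deriv \<theta>) x)" for x
  proof (cases "\<theta> x = 0 \<and> deriv (deriv \<theta>) x = 0")
    case False
    then show ?thesis using G[of x] by (simp add: \<theta>_def d\<psi>)
  qed (simp add: d\<psi>)
  have "(LINT x|lborel. (G x + pconv g x) * deriv \<psi> x) = 0"
    using D \<psi> unfolding dist_deriv_zero_def by blast
  then have "0 = (LINT x|lborel. pconv g x * (\<theta> x - deriv (deriv \<theta>) x))"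
    by (simp add: pointwise)
  also have "\<dots> = (LINT y|lborel. g y * \<theta> y)"
    by (rule integral_pconv_mult_Green[OF g \<theta>(1)])
  finally show ?thesis by (simp add: \<theta>_def)
qed

lemma deriv_iter_deriv_step_window_eq_0:
  assumes "e > 0" "e < \<bar>x - a\<bar>" "e < \<bar>x - b\<bar>"
  shows "(deriv ^^ k) (deriv (step_window a b e)) x = 0"
proof -
  define S where "S = {x. e < \<bar>x - a\<bar> \<and> e < \<bar>x - b\<bar>}"
  have "open S"
    unfolding S_def by (intro open_Collect_conj open_Collect_less continuous_intros)
  moreover have "deriv (step_window a b e) y = 0" if "y \<in> S" for y
    using that assms(1) by (simp add: S_def deriv_step_window mollifier_at_eq_0)
  moreover have "x \<in> S"
    using assms(2,3) by (simp add: S_def)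
  ultimately show ?thesis
    by (rule deriv_iter_vanishing_on_open)
qed

lemma eq_if_dist_deriv_zero_pconv_near:
  fixes G g h :: "real \<Rightarrow> real"
  assumes D: "dist_deriv_zero (\<lambda>x. G x + pconv g x)"
    and g: "g \<in> borel_measurable lborel" "integrable lborel (\<lambda>y. g y * exp (- \<bar>y\<bar>))"
    and h: "continuous_on UNIV h" and r: "r > 0"
    and G: "\<And>x. \<bar>x - a\<bar> < r \<or> \<bar>x - b\<bar> < r \<Longrightarrow> G x = 0"
    and gh: "AE y in lborel. \<bar>y - a\<bar> < r \<or> \<bar>y - b\<bar> < r \<longrightarrow> g y = h y"
  shows "h a = h b"
proof (rule eq_if_integral_mult_deriv_step_window_eq_0[OF h])
  have "(LINT y|lborel. h y * deriv (step_window a b e) y) = 0" if e: "0 < e" "e < r" for e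
  proof -
    define \<theta> where "\<theta> = deriv (step_window a b e)"
    have far: "\<theta> x = 0 \<and> deriv (deriv \<theta>) x = 0" if "\<not> (\<bar>x - a\<bar> < r \<or> \<bar>x - b\<bar> < r)" for x
      using that e deriv_iter_deriv_step_window_eq_0[of e x a b 0]
        deriv_iter_deriv_step_window_eq_0[of e x a b 2]
      by (simp add: \<theta>_def numeral_2_eq_2)
    have "(LINT y|lborel. g y * \<theta> y) = 0"
      unfolding \<theta>_def
      by (rule integral_mult_deriv_eq_0_if_dist_deriv_zero_pconv[OF D g test_function_step_window[OF e(1)]])
         (use G far in \<open>auto simp: \<theta>_def\<close>)
    also have "(LINT y|lborel. g y * \<theta> y) = (LINT y|lborel. h y * \<theta> y)"
    proof (rule integral_cong_AE)
      have "continuous_on UNIV \<theta>"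
        using test_function_deriv[OF test_function_step_window[OF e(1)]]
        by (simp add: \<theta>_def test_function_iff smooth_continuous)
      then have "\<theta> \<in> borel_measurable lborel" "h \<in> borel_measurable lborel"
        using h by (simp_all add: borel_measurable_continuous_onI)
      then show "(\<lambda>y. g y * \<theta> y) \<in> borel_measurable lborel" "(\<lambda>y. h y * \<theta> y) \<in> borel_measurable lborel"
        using g(1) by (simp_all add: borel_measurable_times)
      show "AE y in lborel. g y * \<theta> y = h y * \<theta> y"
        using gh
      proof eventually_elim
        case (elim y)
        then show ?case
          using far[of y] by (cases "\<bar>y - a\<bar> < r \<or> \<bar>y - b\<bar> < r") simp_all
      qed
    qed
    finally show ?thesis by (simp add: \<theta>_def)
  qed
  then show "\<forall>\<^sub>F e in at_right 0. (LINT y|lborel. h y * deriv (step_window a b e) y) = 0"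
    using r unfolding eventually_at_right_field by blast
qed

lemma solitary_wave_kernel_integrable:
  fixes A \<sigma> :: real and \<phi> \<phi>' \<eta> :: "real \<Rightarrow> real"
  assumes "L2 \<phi>" "L2 \<phi>'" "L2 \<eta>"
  defines "g \<equiv> \<lambda>y. - A * \<phi> y + (3 - \<sigma>) / 2 * (\<phi> y)\<^sup>2 + \<sigma> / 2 * (\<phi>' y)\<^sup>2 + 1 / 2 * (1 + \<eta> y)\<^sup>2"
  shows "g \<in> borel_measurable lborel" "integrable lborel (\<lambda>y. g y * exp (- \<bar>y\<bar>))"
proof -
  have [measurable]: "\<phi> \<in> borel_measurable borel" "\<phi>' \<in> borel_measurable borel" "\<eta> \<in> borel_measurable borel"
    using assms by (simp_all add: L2_def)
  show "g \<in> borel_measurable lborel"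
    unfolding g_def by measurable
  define w :: "real \<Rightarrow> real" where "w y = exp (- \<bar>y\<bar>)" for y
  have "integrable lborel (\<lambda>y. - A * (\<phi> y * w y) + (3 - \<sigma>) / 2 * ((\<phi> y)\<^sup>2 * w y)
      + \<sigma> / 2 * ((\<phi>' y)\<^sup>2 * w y) + 1 / 2 * (w y + 2 * (\<eta> y * w y) + (\<eta> y)\<^sup>2 * w y))"
    unfolding w_def
    by (intro Bochner_Integration.integrable_add integrable_mult_right integrable_exp_minus_abs
        L2_integrable_mult_exp L2_integrable_square_mult_exp assms(1-3))
  moreover have "g y * w y = - A * (\<phi> y * w y) + (3 - \<sigma>) / 2 * ((\<phi> y)\<^sup>2 * w y)
      + \<sigma> / 2 * ((\<phi>' y)\<^sup>2 * w y) + 1 / 2 * (w y + 2 * (\<eta> y * w y) + (\<eta> y)\<^sup>2 * w y)" for y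
    by (simp add: g_def power2_eq_square algebra_simps)
  ultimately show "integrable lborel (\<lambda>y. g y * exp (- \<bar>y\<bar>))"
    by (simp add: w_def)
qed

lemma solitary_wave_height_where_profile_vanishes:
  fixes \<phi> \<phi>' \<eta> :: "real \<Rightarrow> real"
  assumes H: "H1_with \<phi> \<phi>'" and L\<eta>: "L2 \<eta>" and c\<eta>: "continuous_on UNIV \<eta>"
    and E: "dist_deriv_zero (\<lambda>x. - c * \<phi> x + \<sigma> / 2 * (\<phi> x)\<^sup>2
           + pconv (\<lambda>y. - A * \<phi> y + (3 - \<sigma>) / 2 * (\<phi> y)\<^sup>2 + \<sigma> / 2 * (\<phi>' y)\<^sup>2
                        + 1 / 2 * (1 + \<eta> y)\<^sup>2) x)"
    and r: "r > 0" and Z: "\<And>y. \<bar>y - a\<bar> < r \<or> \<bar>y - b\<bar> < r \<Longrightarrow> \<phi> y = 0"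
  shows "(1 + \<eta> a)\<^sup>2 = (1 + \<eta> b)\<^sup>2"
proof -
  have L: "L2 \<phi>" "L2 \<phi>'" "weak_deriv \<phi> \<phi>'"
    using H by (simp_all add: H1_with_def)
  have "AE y in lborel. a - r < y \<and> y < a + r \<longrightarrow> \<phi>' y = 0"
       "AE y in lborel. b - r < y \<and> y < b + r \<longrightarrow> \<phi>' y = 0"
    by (intro weak_deriv_AE_eq_0[OF L(3,2)] Z; simp add: abs_less_iff)+
  then have gh: "AE y in lborel. \<bar>y - a\<bar> < r \<or> \<bar>y - b\<bar> < r \<longrightarrow>
      - A * \<phi> y + (3 - \<sigma>) / 2 * (\<phi> y)\<^sup>2 + \<sigma> / 2 * (\<phi>' y)\<^sup>2 + 1 / 2 * (1 + \<eta> y)\<^sup>2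
        = 1 / 2 * (1 + \<eta> y)\<^sup>2"
  proof eventually_elim
    case (elim y)
    show ?case
    proof
      assume "\<bar>y - a\<bar> < r \<or> \<bar>y - b\<bar> < r"
      then have "\<phi> y = 0" "\<phi>' y = 0"
        using Z elim by (auto simp: abs_less_iff)
      then show "- A * \<phi> y + (3 - \<sigma>) / 2 * (\<phi> y)\<^sup>2 + \<sigma> / 2 * (\<phi>' y)\<^sup>2 + 1 / 2 * (1 + \<eta> y)\<^sup>2
          = 1 / 2 * (1 + \<eta> y)\<^sup>2"
        by simp
    qed
  qed
  have h: "continuous_on UNIV (\<lambda>y. 1 / 2 * (1 + \<eta> y)\<^sup>2)"
    by (intro continuous_intros c\<eta>)
  have G: "- c * \<phi> x + \<sigma> / 2 * (\<phi> x)\<^sup>2 = 0" if "\<bar>x - a\<bar> < r \<or> \<bar>x - b\<bar> < r" for x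
    using Z[OF that] by simp
  have "1 / 2 * (1 + \<eta> a)\<^sup>2 = 1 / 2 * (1 + \<eta> b)\<^sup>2"
    using eq_if_dist_deriv_zero_pconv_near[OF E solitary_wave_kernel_integrable[OF L(1,2) L\<eta>] h r G gh]
    by simp
  then show ?thesis by simp
qed

lemma continuous_two_valued_tendsto_eq:
  fixes f :: "real \<Rightarrow> real"
  assumes "continuous_on UNIV f" "\<And>x. f x = a \<or> f x = b" "(f \<longlongrightarrow> l) at_infinity"
  shows "f x = l"
proof -
  have "f ` UNIV \<subseteq> {a, b}"
    using assms(2) by auto
  then have "finite (f ` UNIV)"
    by (rule finite_subset) simp
  moreover have "connected (f ` UNIV)"
    using assms(1) by (rule connected_continuous_image) simp
  ultimately obtain z where z: "f ` UNIV = {z}"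
    using connected_finite_iff_sing by (metis image_is_empty UNIV_not_empty)
  then have "f = (\<lambda>_. z)"
    by (auto simp: fun_eq_iff)
  with assms(3) have "((\<lambda>_::real. z) \<longlongrightarrow> l) at_infinity"
    by simp
  then have "z = l"
    by (rule tendsto_unique[OF trivial_limit_at_infinity tendsto_const])
  with \<open>f = (\<lambda>_. z)\<close> show ?thesis by simp
qed

lemma dist_deriv_zero_tendsto_0_eq_0:
  fixes F :: "real \<Rightarrow> real"
  assumes "continuous_on UNIV F" "dist_deriv_zero F" "(F \<longlongrightarrow> 0) at_infinity"
  shows "F x = 0"
proof -
  have "F y = F 0 \<or> F y = F 0" for y
    using dist_deriv_zero_imp_constant[OF assms(1,2)] by simp
  then show ?thesis
    by (rule continuous_two_valued_tendsto_eq[OF assms(1) _ assms(3)])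
qed

lemma solitary_wave_flux_eq_0:
  fixes \<phi> \<eta> :: "real \<Rightarrow> real"
  assumes "continuous_on UNIV \<phi>" "continuous_on UNIV \<eta>"
    and "(\<phi> \<longlongrightarrow> 0) at_infinity" "(\<eta> \<longlongrightarrow> 0) at_infinity"
    and "dist_deriv_zero (\<lambda>x. - c * \<eta> x + (1 + \<eta> x) * \<phi> x)"
  shows "- c * \<eta> x + (1 + \<eta> x) * \<phi> x = 0"
proof -
  have "continuous_on UNIV (\<lambda>x. - c * \<eta> x + (1 + \<eta> x) * \<phi> x)"
    using assms(1,2) by (intro continuous_intros)
  moreover note assms(5)
  moreover have "((\<lambda>x. - c * \<eta> x + (1 + \<eta> x) * \<phi> x) \<longlongrightarrow> - c * 0 + (1 + 0) * 0) at_infinity"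
    using assms(3,4) by (intro tendsto_intros)
  then have "((\<lambda>x. - c * \<eta> x + (1 + \<eta> x) * \<phi> x) \<longlongrightarrow> 0) at_infinity"
    by (simp only: mult_zero_right add_0)
  ultimately show ?thesis
    by (rule dist_deriv_zero_tendsto_0_eq_0)
qed

lemma height_eq_minus_1_if_profile_not_locally_zero:
  fixes \<phi> \<eta> :: "real \<Rightarrow> real"
  assumes c\<eta>: "continuous_on UNIV \<eta>" and P: "\<And>x. (1 + \<eta> x) * \<phi> x = 0"
    and not_zero: "\<not> (\<exists>r>0. \<forall>y. \<bar>y - x\<bar> < r \<longrightarrow> \<phi> y = 0)"
  shows "\<eta> x = -1"
proof (rule ccontr)
  assume "\<eta> x \<noteq> -1"
  then have "\<bar>\<eta> x + 1\<bar> > 0" by simp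
  moreover have "isCont \<eta> x"
    using c\<eta> by (simp add: continuous_on_eq_continuous_at)
  ultimately obtain r where r: "r > 0" "\<forall>y. dist y x < r \<longrightarrow> dist (\<eta> y) (\<eta> x) < \<bar>\<eta> x + 1\<bar>"
    unfolding continuous_at_eps_delta by blast
  have "\<phi> y = 0" if "\<bar>y - x\<bar> < r" for y
  proof -
    have "\<bar>\<eta> y - \<eta> x\<bar> < \<bar>\<eta> x + 1\<bar>"
      using r(2) that by (simp add: dist_real_def)
    then have "1 + \<eta> y \<noteq> 0" by linarith
    then show ?thesis using P[of y] by simp
  qed
  with r(1) not_zero show False by blast
qed

lemma stationary_solitary_wave_trivial:
  fixes \<phi> \<phi>' \<eta> :: "real \<Rightarrow> real"
  assumes H: "H1_with \<phi> \<phi>'" and L\<eta>: "L2 \<eta>" and c\<eta>: "continuous_on UNIV \<eta>"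
    and l\<eta>: "(\<eta> \<longlongrightarrow> 0) at_infinity"
    and E: "dist_deriv_zero (\<lambda>x. - c * \<phi> x + \<sigma> / 2 * (\<phi> x)\<^sup>2
           + pconv (\<lambda>y. - A * \<phi> y + (3 - \<sigma>) / 2 * (\<phi> y)\<^sup>2 + \<sigma> / 2 * (\<phi>' y)\<^sup>2
                        + 1 / 2 * (1 + \<eta> y)\<^sup>2) x)"
    and P: "\<And>x. (1 + \<eta> x) * \<phi> x = 0"
  shows "\<phi> x = 0 \<and> \<eta> x = 0"
proof -
  define vanishing_near :: "real \<Rightarrow> bool"
    where "vanishing_near x \<longleftrightarrow> (\<exists>r>0. \<forall>y. \<bar>y - x\<bar> < r \<longrightarrow> \<phi> y = 0)" for x
  have at_bottom: "\<eta> x = -1" if "\<not> vanishing_near x" for x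
    using height_eq_minus_1_if_profile_not_locally_zero[OF c\<eta> P] that
    unfolding vanishing_near_def by blast
  have same: "(1 + \<eta> x)\<^sup>2 = (1 + \<eta> x')\<^sup>2" if near: "vanishing_near x" "vanishing_near x'" for x x'
  proof -
    obtain r r' where "r > 0" "r' > 0" "\<forall>y. \<bar>y - x\<bar> < r \<longrightarrow> \<phi> y = 0" "\<forall>y. \<bar>y - x'\<bar> < r' \<longrightarrow> \<phi> y = 0"
      using near unfolding vanishing_near_def by blast
    then have "\<phi> y = 0" if "\<bar>y - x\<bar> < min r r' \<or> \<bar>y - x'\<bar> < min r r'" for y
      using that by auto
    moreover have "min r r' > 0"
      using \<open>r > 0\<close> \<open>r' > 0\<close> by simp
    ultimately show ?thesis
      by (rule solitary_wave_height_where_profile_vanishes[OF H L\<eta> c\<eta> E, rotated])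
  qed
  obtain K where K: "\<forall>x. (1 + \<eta> x)\<^sup>2 = 0 \<or> (1 + \<eta> x)\<^sup>2 = K"
  proof (cases "\<exists>x0. vanishing_near x0")
    case True
    then obtain x0 where "vanishing_near x0" by blast
    have "(1 + \<eta> x)\<^sup>2 = 0 \<or> (1 + \<eta> x)\<^sup>2 = (1 + \<eta> x0)\<^sup>2" for x
    proof (cases "vanishing_near x")
      case True
      then show ?thesis using same[OF _ \<open>vanishing_near x0\<close>] by blast
    qed (simp add: at_bottom)
    then have "\<forall>x. (1 + \<eta> x)\<^sup>2 = 0 \<or> (1 + \<eta> x)\<^sup>2 = (1 + \<eta> x0)\<^sup>2"
      by blast
    then show ?thesis by (rule that)
  next
    case False
    then have "\<forall>x. (1 + \<eta> x)\<^sup>2 = 0 \<or> (1 + \<eta> x)\<^sup>2 = 0"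
      using at_bottom by simp
    then show ?thesis by (rule that)
  qed
  have cq: "continuous_on UNIV (\<lambda>x. (1 + \<eta> x)\<^sup>2)"
    by (intro continuous_intros c\<eta>)
  have lq: "((\<lambda>x. (1 + \<eta> x)\<^sup>2) \<longlongrightarrow> (1 + 0)\<^sup>2) at_infinity"
    by (intro tendsto_intros l\<eta>)
  have "(1 + \<eta> x)\<^sup>2 = (1 + 0)\<^sup>2" for x
    by (rule continuous_two_valued_tendsto_eq[OF cq K[rule_format] lq])
  then have q1: "1 + \<eta> x = 1 \<or> 1 + \<eta> x = -1" for x
    using power2_eq_iff[of "1 + \<eta> x" 1] by simp
  have \<phi>0: "\<phi> x = 0" for x
  proof -
    have "1 + \<eta> x \<noteq> 0" using q1[of x] by linarith
    then show ?thesis using P[of x] by simp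
  qed
  have "\<eta> x = 0 \<or> \<eta> x = -2" for x
    using q1[of x] by linarith
  then have "\<eta> x = 0" for x
    by (rule continuous_two_valued_tendsto_eq[OF c\<eta> _ l\<eta>])
  with \<phi>0 show ?thesis by simp
qed

theorem proposition2p4:
  fixes A \<sigma> c :: real and \<phi> \<phi>' \<eta> :: "real \<Rightarrow> real"
  assumes "A > 0"
    and "H1_with \<phi> \<phi>'" and "H1 \<eta>"
    and "continuous_on UNIV \<phi>" and "continuous_on UNIV \<eta>"
    and "\<exists>x. \<phi> x \<noteq> 0 \<or> \<eta> x \<noteq> 0"
    and "(\<phi> \<longlongrightarrow> 0) at_infinity" and "(\<eta> \<longlongrightarrow> 0) at_infinity"
    and "dist_deriv_zero (\<lambda>x. - c * \<phi> x + \<sigma> / 2 * (\<phi> x)\<^sup>2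
           + pconv (\<lambda>y. - A * \<phi> y + (3 - \<sigma>) / 2 * (\<phi> y)\<^sup>2 + \<sigma> / 2 * (\<phi>' y)\<^sup>2
                        + 1 / 2 * (1 + \<eta> y)\<^sup>2) x)"
    and "dist_deriv_zero (\<lambda>x. - c * \<eta> x + (1 + \<eta> x) * \<phi> x)"
  shows "c \<noteq> 0 \<and> (\<forall>x. \<phi> x \<noteq> c)"
proof -
  have L\<eta>: "L2 \<eta>"
    using assms(3) by (auto simp: H1_def H1_with_def)
  have mass: "- c * \<eta> x + (1 + \<eta> x) * \<phi> x = 0" for x
    using assms(4,5,7,8,10) by (rule solitary_wave_flux_eq_0)
  have "c \<noteq> 0"
  proof
    assume "c = 0"
    then have "(1 + \<eta> x) * \<phi> x = 0" for x
      using mass[of x] by simp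
    then show False
      using stationary_solitary_wave_trivial[OF assms(2) L\<eta> assms(5,8,9)] assms(6) by blast
  qed
  moreover have "\<phi> x \<noteq> c" for x
    using mass[of x] \<open>c \<noteq> 0\<close> by (auto simp: algebra_simps)
  ultimately show ?thesis by blast
qed

end
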